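(* Let $G$ be a finite simple connected graph without isolated vertices. Then Dom has a winning strategy in the Sepy-start Disjoint Domination Game on $G$ even when Sepy is allowed to pass at any time except in the first move of the game (Dom not passing).
   Context: For a vertex $v$, $N[v]$ denotes its closed neighborhood. The Disjoint Domination Game on an isolate-free graph $G$ is played by Dom and Sepy with colors $p$ and $b$; $V_p,V_b$ denote the current sets of vertices of each color. Players alternate; either player may use either color. A move chooses a vertex $v$ and a color $c$ such that (i) $v$ is uncolored and (ii) some $u\in N[v]$ satisfies $N[u]\cap V_c=\emptyset$ (before the move); then $v$ gets color $c$. In this variant Sepy may pass instead of moving on any of his turns except the first move of the game, which is Sepy's. The game ends as soon as either (s* ) some vertex $v$ has $N[v]\subseteq V_p$ or $N[v]\subseteq V_b$ — Sepy wins; or (d* ) both $V_p$ and $V_b$ are dominating sets of $G$ — Dom wins. *)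

theory Defs
  imports Main
begin

definition simple_graph :: "'a set \<Rightarrow> ('a \<Rightarrow> 'a \<Rightarrow> bool) \<Rightarrow> bool" where
  "simple_graph V E \<longleftrightarrow> finite V \<and> (\<forall>u v. E u v \<longrightarrow> u \<in> V \<and> v \<in> V)
     \<and> (\<forall>u v. E u v \<longrightarrow> E v u) \<and> (\<forall>v. \<not> E v v)"

definition connected_graph :: "'a set \<Rightarrow> ('a \<Rightarrow> 'a \<Rightarrow> bool) \<Rightarrow> bool" where
  "connected_graph V E \<longleftrightarrow> (\<forall>u\<in>V. \<forall>v\<in>V. E\<^sup>*\<^sup>* u v)"

definition isolate_free :: "'a set \<Rightarrow> ('a \<Rightarrow> 'a \<Rightarrow> bool) \<Rightarrow> bool" where
  "isolate_free V E \<longleftrightarrow> (\<forall>v\<in>V. \<exists>u. E v u)"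

definition cnbh :: "('a \<Rightarrow> 'a \<Rightarrow> bool) \<Rightarrow> 'a \<Rightarrow> 'a set" where
  "cnbh E v = insert v {u. E v u}"

definition dominating :: "'a set \<Rightarrow> ('a \<Rightarrow> 'a \<Rightarrow> bool) \<Rightarrow> 'a set \<Rightarrow> bool" where
  "dominating V E D \<longleftrightarrow> (\<forall>v\<in>V. cnbh E v \<inter> D \<noteq> {})"

datatype colour = Pc | Bc

type_synonym 'a pos = "'a set \<times> 'a set"

fun cls :: "'a pos \<Rightarrow> colour \<Rightarrow> 'a set" where
  "cls (P, B) Pc = P"
| "cls (P, B) Bc = B"

fun paint :: "'a pos \<Rightarrow> 'a \<Rightarrow> colour \<Rightarrow> 'a pos" where
  "paint (P, B) v Pc = (insert v P, B)"
| "paint (P, B) v Bc = (P, insert v B)"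

definition legal_move :: "'a set \<Rightarrow> ('a \<Rightarrow> 'a \<Rightarrow> bool) \<Rightarrow> 'a pos \<Rightarrow> 'a \<Rightarrow> colour \<Rightarrow> bool" where
  "legal_move V E s v c \<longleftrightarrow> v \<in> V \<and> v \<notin> fst s \<and> v \<notin> snd s
     \<and> (\<exists>u\<in>cnbh E v. cnbh E u \<inter> cls s c = {})"

definition sepy_won :: "'a set \<Rightarrow> ('a \<Rightarrow> 'a \<Rightarrow> bool) \<Rightarrow> 'a pos \<Rightarrow> bool" where
  "sepy_won V E s \<longleftrightarrow> (\<exists>v\<in>V. cnbh E v \<subseteq> fst s \<or> cnbh E v \<subseteq> snd s)"

definition dom_won :: "'a set \<Rightarrow> ('a \<Rightarrow> 'a \<Rightarrow> bool) \<Rightarrow> 'a pos \<Rightarrow> bool" where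
  "dom_won V E s \<longleftrightarrow> dominating V E (fst s) \<and> dominating V E (snd s)"

text \<open>Positions from which Dom can force a win (the game is finite, so the least
fixed point below is exactly the set of positions where Dom has a winning strategy).
dom_wins_D: Dom is to move (Dom may not pass).
dom_wins_S pass_ok: Sepy is to move; Sepy may pass iff pass_ok.\<close>
inductive dom_wins_D :: "'a set \<Rightarrow> ('a \<Rightarrow> 'a \<Rightarrow> bool) \<Rightarrow> 'a pos \<Rightarrow> bool"
  and dom_wins_S :: "'a set \<Rightarrow> ('a \<Rightarrow> 'a \<Rightarrow> bool) \<Rightarrow> bool \<Rightarrow> 'a pos \<Rightarrow> bool"
  for V E where
  D_end: "\<not> sepy_won V E s \<Longrightarrow> dom_won V E s \<Longrightarrow> dom_wins_D V E s"
| D_move: "\<not> sepy_won V E s \<Longrightarrow> legal_move V E s v c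
     \<Longrightarrow> dom_wins_S V E True (paint s v c) \<Longrightarrow> dom_wins_D V E s"
| S_end: "\<not> sepy_won V E s \<Longrightarrow> dom_won V E s \<Longrightarrow> dom_wins_S V E p s"
| S_move: "\<not> sepy_won V E s
     \<Longrightarrow> (\<forall>v c. legal_move V E s v c \<longrightarrow> dom_wins_D V E (paint s v c))
     \<Longrightarrow> (p \<longrightarrow> dom_wins_D V E s) \<Longrightarrow> dom_wins_S V E p s"

end

theory Submission
  imports Defs
begin

text \<open>Dom keeps the position paired: every coloured vertex has a neighbour of the
other colour. Then no closed neighbourhood is monochromatic, so Sepy never wins.
A move of Sepy at v either keeps the position paired, or v has no neighbour of the
other colour; legality and isolate-freeness then give an uncoloured neighbour w of v,
and Dom colours w with the other colour, which is legal because N[v] misses that colour.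
When Dom must move, some vertex u misses a colour c in N[u]: if N[u] meets a coloured
vertex, Dom colours u with c; otherwise connectivity yields an uncoloured vertex next to
both a coloured vertex and a vertex with uncoloured closed neighbourhood, and Dom colours
it opposite to its coloured neighbour. Passing gains Sepy nothing, since Dom's own moves
preserve the invariant, and the game is finite.\<close>

fun opp :: "colour \<Rightarrow> colour" where
  "opp Pc = Bc"
| "opp Bc = Pc"

lemma opp_opp [simp]: "opp (opp c) = c"
  by (cases c) auto

lemma opp_neq [simp]: "opp c \<noteq> c"
  by (cases c) auto

lemma simple_graph_edgeD:
  assumes "simple_graph V E" and "E u v"
  shows "u \<in> V" and "v \<in> V" and "E v u" and "u \<noteq> v"
  using assms unfolding simple_graph_def by metis+

definition coloured :: "'a pos \<Rightarrow> 'a set" where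
  "coloured s = fst s \<union> snd s"

lemma cls_fst_snd [simp]: "cls s Pc = fst s" "cls s Bc = snd s"
  by (cases s; simp)+

lemma all_colour: "(\<forall>c. P c) \<longleftrightarrow> P Pc \<and> P Bc"
  by (metis colour.exhaust)

lemma ex_colour: "(\<exists>c. P c) \<longleftrightarrow> P Pc \<or> P Bc"
  by (metis colour.exhaust)

lemma coloured_iff_cls: "x \<in> coloured s \<longleftrightarrow> (\<exists>c. x \<in> cls s c)"
  by (simp add: coloured_def ex_colour)

lemma cls_subset_coloured: "cls s c \<subseteq> coloured s"
  by (cases c) (auto simp: coloured_def)

lemma coloured_imp_opp: "x \<in> coloured s \<Longrightarrow> x \<notin> cls s c \<Longrightarrow> x \<in> cls s (opp c)"
  by (cases c) (auto simp: coloured_def)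

lemma coloured_paint [simp]: "coloured (paint s v c) = insert v (coloured s)"
  by (cases s; cases c) (auto simp: coloured_def)

lemma in_cnbh_iff: "u \<in> cnbh E v \<longleftrightarrow> u = v \<or> E v u"
  by (auto simp: cnbh_def)

lemma cnbh_self: "v \<in> cnbh E v"
  by (simp add: cnbh_def)

lemma legal_move_iff:
  "legal_move V E s v c \<longleftrightarrow>
     v \<in> V \<and> v \<notin> coloured s \<and> (\<exists>u\<in>cnbh E v. cnbh E u \<inter> cls s c = {})"
  by (auto simp: legal_move_def coloured_def)

lemma sepy_won_iff: "sepy_won V E s \<longleftrightarrow> (\<exists>v\<in>V. \<exists>c. cnbh E v \<subseteq> cls s c)"
  by (simp add: sepy_won_def ex_colour)

lemma dom_won_iff: "dom_won V E s \<longleftrightarrow> (\<forall>v\<in>V. \<forall>c. cnbh E v \<inter> cls s c \<noteq> {})"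
  by (auto simp: dom_won_def dominating_def all_colour)

lemma in_cls_paint: "x \<in> cls (paint s v c) d \<longleftrightarrow> x \<in> cls s d \<or> (x = v \<and> d = c)"
  by (cases s; cases c; cases d) auto

lemma cls_subset_paint: "cls s d \<subseteq> cls (paint s v c) d"
  by (auto simp: in_cls_paint)

lemma sepy_won_paint: "sepy_won V E s \<Longrightarrow> sepy_won V E (paint s v c)"
  unfolding sepy_won_iff by (meson cls_subset_paint subset_trans)

lemma card_uncoloured_paint:
  assumes "finite V" and "legal_move V E s v c"
  shows "card (V - coloured (paint s v c)) < card (V - coloured s)"
proof -
  have "v \<in> V - coloured s"
    using assms(2) by (simp add: legal_move_iff)
  then show ?thesis
    using assms(1) by (metis Diff_insert card_Diff1_less coloured_paint finite_Diff)
qed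

definition paired :: "'a set \<Rightarrow> ('a \<Rightarrow> 'a \<Rightarrow> bool) \<Rightarrow> 'a pos \<Rightarrow> bool" where
  "paired V E s \<longleftrightarrow> fst s \<inter> snd s = {} \<and> coloured s \<subseteq> V
     \<and> (\<forall>c. \<forall>x\<in>cls s c. \<exists>y. E x y \<and> y \<in> cls s (opp c))"

lemma paired_intro:
  assumes "fst s \<inter> snd s = {}" and "coloured s \<subseteq> V"
    and "\<And>x d. x \<in> cls s d \<Longrightarrow> \<exists>y. E x y \<and> y \<in> cls s (opp d)"
  shows "paired V E s"
  using assms unfolding paired_def by blast

lemma paired_disjoint: "paired V E s \<Longrightarrow> fst s \<inter> snd s = {}"
  by (simp add: paired_def)

lemma paired_coloured_subset: "paired V E s \<Longrightarrow> coloured s \<subseteq> V"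
  by (simp add: paired_def)

lemma paired_witness: "paired V E s \<Longrightarrow> x \<in> cls s d \<Longrightarrow> \<exists>y. E x y \<and> y \<in> cls s (opp d)"
  unfolding paired_def by blast

lemma paired_empty: "paired V E ({}, {})"
proof (rule paired_intro)
  fix x :: 'a and d
  assume "x \<in> cls ({}, {}) d"
  then show "\<exists>y. E x y \<and> y \<in> cls ({}, {}) (opp d)"
    by (cases d) auto
qed (auto simp: coloured_def)

lemma paired_cls_disjoint: "paired V E s \<Longrightarrow> x \<in> cls s c \<Longrightarrow> x \<notin> cls s (opp c)"
  using paired_disjoint[of V E s] by (cases c) auto

lemma paired_not_sepy_won:
  assumes "paired V E s"
  shows "\<not> sepy_won V E s"
proof
  assume "sepy_won V E s"
  then obtain v c where v: "cnbh E v \<subseteq> cls s c"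
    by (auto simp: sepy_won_iff)
  then have "v \<in> cls s c"
    using cnbh_self by (rule subsetD)
  then obtain y where "E v y" and "y \<in> cls s (opp c)"
    using paired_witness[OF assms] by blast
  moreover have "y \<in> cls s c"
    using v \<open>E v y\<close> by (auto simp: cnbh_def)
  ultimately show False
    using paired_cls_disjoint[OF assms] by blast
qed

lemma paired_paint:
  assumes paired: "paired V E s" and "v \<in> V" and "v \<notin> coloured s"
    and "E v y" and "y \<in> cls s (opp c)"
  shows "paired V E (paint s v c)"
proof (rule paired_intro)
  show "fst (paint s v c) \<inter> snd (paint s v c) = {}"
    using paired_disjoint[OF paired] assms(3) by (cases s; cases c) (auto simp: coloured_def)
  show "coloured (paint s v c) \<subseteq> V"
    using paired_coloured_subset[OF paired] assms(2) by simp
  fix x d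
  assume "x \<in> cls (paint s v c) d"
  then consider "x \<in> cls s d" | "x = v" "d = c"
    unfolding in_cls_paint by blast
  then show "\<exists>y. E x y \<and> y \<in> cls (paint s v c) (opp d)"
  proof cases
    case 1
    then obtain y where "E x y" "y \<in> cls s (opp d)"
      using paired_witness[OF paired] by blast
    then show ?thesis
      by (auto simp: in_cls_paint)
  next
    case 2
    then show ?thesis
      using assms(4,5) by (auto simp: in_cls_paint)
  qed
qed

lemma paired_paint_edge:
  assumes graph: "simple_graph V E" and paired: "paired V E s"
    and "v \<notin> coloured s" and "w \<notin> coloured s" and "E v w"
  shows "paired V E (paint (paint s v c) w (opp c))"
proof -
  have "v \<in> V" "w \<in> V" "E w v" "v \<noteq> w"
    using simple_graph_edgeD[OF graph assms(5)] by simp_all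
  let ?s = "paint (paint s v c) w (opp c)"
  show ?thesis
  proof (rule paired_intro)
    show "fst ?s \<inter> snd ?s = {}"
      using paired_disjoint[OF paired] assms(3,4) \<open>v \<noteq> w\<close>
      by (cases s; cases c) (auto simp: coloured_def)
    show "coloured ?s \<subseteq> V"
      using paired_coloured_subset[OF paired] \<open>v \<in> V\<close> \<open>w \<in> V\<close> by simp
    fix x d
    assume "x \<in> cls ?s d"
    then consider "x \<in> cls s d" | "x = v" "d = c" | "x = w" "d = opp c"
      unfolding in_cls_paint by blast
    then show "\<exists>y. E x y \<and> y \<in> cls ?s (opp d)"
    proof cases
      case 1
      then obtain y where "E x y" "y \<in> cls s (opp d)"
        using paired_witness[OF paired] by blast
      then show ?thesis
        by (auto simp: in_cls_paint)
    next
      case 2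
      then show ?thesis
        using \<open>E v w\<close> unfolding in_cls_paint by auto
    next
      case 3
      then show ?thesis
        using \<open>E w v\<close> unfolding in_cls_paint by auto
    qed
  qed
qed

lemma paired_reply:
  assumes graph: "simple_graph V E" and "isolate_free V E"
    and paired: "paired V E s" and move: "legal_move V E s v c"
    and unpaired: "\<not> (\<exists>y. E v y \<and> y \<in> cls s (opp c))"
  shows "\<exists>w. legal_move V E (paint s v c) w (opp c)
    \<and> paired V E (paint (paint s v c) w (opp c))"
proof -
  have vV: "v \<in> V" and v_unc: "v \<notin> coloured s"
    and "\<exists>u\<in>cnbh E v. cnbh E u \<inter> cls s c = {}"
    using move unfolding legal_move_iff by simp_all
  then obtain u where u: "u \<in> cnbh E v" "cnbh E u \<inter> cls s c = {}"
    by blast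
  have "\<exists>w. E v w \<and> w \<notin> cls s c"
  proof (cases "u = v")
    case True
    obtain w where "E v w"
      using assms(2) vV by (auto simp: isolate_free_def)
    then show ?thesis
      using u True by (auto simp: cnbh_def)
  next
    case False
    then show ?thesis
      using u by (auto simp: cnbh_def)
  qed
  then obtain w where w: "E v w" "w \<notin> coloured s"
    using unpaired coloured_imp_opp[of _ s c] by blast
  have "w \<in> V" "E w v" "w \<noteq> v"
    using simple_graph_edgeD[OF graph w(1)] by simp_all
  have "cnbh E v \<inter> cls (paint s v c) (opp c) = {}"
    using unpaired v_unc by (auto simp: in_cls_paint in_cnbh_iff coloured_iff_cls)
  then have "legal_move V E (paint s v c) w (opp c)"
    unfolding legal_move_iff coloured_paint
    using \<open>w \<in> V\<close> \<open>E w v\<close> \<open>w \<noteq> v\<close> w(2) by (auto simp: in_cnbh_iff)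
  moreover have "paired V E (paint (paint s v c) w (opp c))"
    using paired_paint_edge[OF graph paired v_unc w(2,1)] .
  ultimately show ?thesis
    by blast
qed

lemma paired_move_opposite_neighbour:
  assumes "paired V E s" and "z \<in> V" and "z \<notin> coloured s" and "E z y" and "y \<in> cls s d"
    and "x \<in> cnbh E z" and "cnbh E x \<inter> cls s (opp d) = {}"
  shows "legal_move V E s z (opp d) \<and> paired V E (paint s z (opp d))"
  using assms paired_paint[of V E s z y "opp d"] by (auto simp: legal_move_iff)

lemma rtranclp_leaves_set:
  assumes "R\<^sup>*\<^sup>* a b" and "a \<in> W" and "b \<notin> W"
  shows "\<exists>x z. x \<in> W \<and> R x z \<and> z \<notin> W"
  using assms by (induction rule: rtranclp_induct) auto

lemma paired_move_near_colour:
  assumes paired: "paired V E s" and uV: "u \<in> V" and u: "cnbh E u \<inter> cls s c = {}"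
    and y: "y \<in> cnbh E u" "y \<in> coloured s"
  shows "\<exists>w c. legal_move V E s w c \<and> paired V E (paint s w c)"
proof -
  have y_opp: "y \<in> cls s (opp c)"
    using coloured_imp_opp[OF y(2)] u y(1) by blast
  have "u \<notin> coloured s"
  proof
    assume "u \<in> coloured s"
    then have "u \<in> cls s (opp c)"
      using coloured_imp_opp[of u s c] u cnbh_self[of u E] by blast
    then obtain z where "E u z" "z \<in> cls s c"
      using paired_witness[OF paired, of u "opp c"] by auto
    then show False
      using u by (auto simp: cnbh_def)
  qed
  moreover have "E u y"
    using y \<open>u \<notin> coloured s\<close> by (auto simp: in_cnbh_iff)
  moreover have "cnbh E u \<inter> cls s (opp (opp c)) = {}"
    using u by simp
  ultimately have "legal_move V E s u (opp (opp c)) \<and> paired V E (paint s u (opp (opp c)))"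
    using y_opp by (intro paired_move_opposite_neighbour[OF paired uV _ _ _ cnbh_self])
  then show ?thesis
    by blast
qed

lemma paired_move_far_from_colour:
  assumes graph: "simple_graph V E" and "connected_graph V E" and paired: "paired V E s"
    and "coloured s \<noteq> {}" and "u \<in> V" and "cnbh E u \<inter> coloured s = {}"
  shows "\<exists>w c. legal_move V E s w c \<and> paired V E (paint s w c)"
proof -
  define W where "W = {x \<in> V. cnbh E x \<inter> coloured s = {}}"
  obtain y0 where y0: "y0 \<in> coloured s"
    using assms(4) by blast
  then have "y0 \<in> V" "y0 \<notin> W"
    using paired_coloured_subset[OF paired] cnbh_self[of y0 E] by (auto simp: W_def)
  moreover have "u \<in> W"
    using assms(5,6) by (simp add: W_def)
  ultimately obtain x z where xz: "x \<in> W" "E x z" "z \<notin> W"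
    using assms(2,5) rtranclp_leaves_set[of E u y0 W] by (auto simp: connected_graph_def)
  have "z \<in> V" "E z x"
    using simple_graph_edgeD[OF graph xz(2)] by simp_all
  have "z \<notin> coloured s"
    using xz(1,2) by (auto simp: W_def cnbh_def)
  then obtain y where "E z y" "y \<in> coloured s"
    using xz(3) \<open>z \<in> V\<close> by (auto simp: W_def in_cnbh_iff)
  then obtain d where "E z y" "y \<in> cls s d"
    unfolding coloured_iff_cls by blast
  moreover have "x \<in> cnbh E z"
    using \<open>E z x\<close> by (simp add: cnbh_def)
  moreover have "cnbh E x \<inter> cls s (opp d) = {}"
    using xz(1) cls_subset_coloured[of s "opp d"] by (auto simp: W_def)
  ultimately have "legal_move V E s z (opp d) \<and> paired V E (paint s z (opp d))"
    by (rule paired_move_opposite_neighbour[OF paired \<open>z \<in> V\<close> \<open>z \<notin> coloured s\<close>])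
  then show ?thesis
    by blast
qed

lemma paired_dom_move:
  assumes "simple_graph V E" and "connected_graph V E"
    and "paired V E s" and "coloured s \<noteq> {}" and "\<not> dom_won V E s"
  shows "\<exists>w c. legal_move V E s w c \<and> paired V E (paint s w c)"
proof -
  obtain u c where "u \<in> V" and "cnbh E u \<inter> cls s c = {}"
    using assms(5) by (auto simp: dom_won_iff)
  then show ?thesis
    using paired_move_near_colour[OF assms(3)] paired_move_far_from_colour[OF assms(1-4)]
    by blast
qed

lemma dom_wins_D_by_move:
  assumes "legal_move V E s w c" and "paired V E (paint s w c)"
    and "dom_wins_S V E True (paint s w c)"
  shows "dom_wins_D V E s"
proof -
  have "\<not> sepy_won V E s"
    using paired_not_sepy_won[OF assms(2)] sepy_won_paint[of V E s w c] by blast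
  then show ?thesis
    using assms(1,3) by (rule D_move)
qed

lemma paired_dom_wins:
  assumes graph: "simple_graph V E" and connected: "connected_graph V E"
    and isolate_free: "isolate_free V E"
  shows "paired V E s \<Longrightarrow> (coloured s \<noteq> {} \<longrightarrow> dom_wins_D V E s)
    \<and> (\<forall>v c. legal_move V E s v c \<longrightarrow> dom_wins_D V E (paint s v c))"
proof (induction "card (V - coloured s)" arbitrary: s rule: less_induct)
  case less
  have fin: "finite V"
    using graph by (simp add: simple_graph_def)
  have after_dom_move: "dom_wins_D V E t"
    if move: "legal_move V E t w c" and paired: "paired V E (paint t w c)"
      and fewer: "card (V - coloured (paint t w c)) < card (V - coloured s)" for t w c
  proof -
    from less.hyps[OF fewer paired] have "dom_wins_S V E True (paint t w c)"
      using paired_not_sepy_won[OF paired] by (auto intro: S_move)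
    with move paired show ?thesis
      by (rule dom_wins_D_by_move)
  qed
  have "dom_wins_D V E s" if nonempty: "coloured s \<noteq> {}"
  proof (cases "dom_won V E s")
    case True
    then show ?thesis
      using paired_not_sepy_won[OF less.prems] by (rule D_end[rotated])
  next
    case False
    then obtain w c where "legal_move V E s w c" "paired V E (paint s w c)"
      using paired_dom_move[OF graph connected less.prems nonempty] by blast
    then show ?thesis
      using after_dom_move card_uncoloured_paint[OF fin] by blast
  qed
  moreover have "dom_wins_D V E (paint s v c)" if move: "legal_move V E s v c" for v c
  proof (cases "\<exists>y. E v y \<and> y \<in> cls s (opp c)")
    case True
    then have "paired V E (paint s v c)"
      using move paired_paint[OF less.prems] by (auto simp: legal_move_iff)
    then show ?thesis
      using less.hyps[OF card_uncoloured_paint[OF fin move]] by simp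
  next
    case False
    then obtain w where "legal_move V E (paint s v c) w (opp c)"
      "paired V E (paint (paint s v c) w (opp c))"
      using paired_reply[OF graph isolate_free less.prems move] by blast
    then show ?thesis
      using after_dom_move card_uncoloured_paint[OF fin] move by (meson order.strict_trans)
  qed
  ultimately show ?case
    by blast
qed

theorem mainTheorem8:
  fixes V :: "'a set" and E :: "'a \<Rightarrow> 'a \<Rightarrow> bool"
  assumes "simple_graph V E" and "connected_graph V E" and "isolate_free V E"
  shows "dom_wins_S V E False ({}, {})"
proof -
  have "\<not> sepy_won V E ({}, {})"
    using paired_not_sepy_won[OF paired_empty] .
  moreover have "\<forall>v c. legal_move V E ({}, {}) v c \<longrightarrow> dom_wins_D V E (paint ({}, {}) v c)"
    using paired_dom_wins[OF assms paired_empty] by blast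
  ultimately show ?thesis
    by (rule S_move) simp
qed

end
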